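(* For every integer $d \geq 2$ and all integers $s_1, \ldots, s_k \geq 1$, $$\frac{s_1}{s_1+\ldots+s_k}\mathsf {Brac}_{d,s_1}+\ldots+\frac{s_k}{s_1+\ldots+s_k}\mathsf {Brac}_{d,s_k}\subseteq \mathsf {Brac}_{d,s_1+\ldots+s_k}.$$ In particular, for all $s \geq 1$, $\mathsf {Brac}_{d,1} =\mathsf {Brac}_{d} \subseteq \mathsf {Brac}_{d,s}$.
   Context: $\Delta_d=\{\alpha\in\mathbb R^d:\alpha_i\ge0,\ \sum_i\alpha_i=1\}$; pairs $(\alpha,\beta)\in\Delta_d^2$ are added and scaled componentwise. $\mathsf{Brac}_d=\{(\alpha,\beta)\in\Delta_d^2:\ \forall i,\ \sqrt{\alpha_i\beta_i}\le\sum_{j\ne i}\sqrt{\alpha_j\beta_j}\}$. For $s\ge1$, $\mathsf{Brac}_{d,s}$ is the set of $(\alpha,\beta)\in\Delta_d^2$ for which there exist $A_1,\dots,A_d,B_1,\dots,B_d\in M_s(\mathbb C)$ with $\sum_i A_iA_i^*=\sum_iB_iB_i^*=I_s$, $\sum_iA_iB_i^*=0$, and $\tfrac1s\|A_i\|_F^2=\alpha_i$, $\tfrac1s\|B_i\|_F^2=\beta_i$ for all $i$, where $\|X\|_F=\operatorname{Tr}(XX^* )^{1/2}$. *)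

theory Defs
  imports Complex_Main "Jordan_Normal_Form.Schur_Decomposition"
begin

(* The index set {1..d} is modelled by a finite type 'd with CARD('d) = d. *)

definition simplex :: "('d::finite \<Rightarrow> real) set" where
  "simplex = {a. (\<forall>i. 0 \<le> a i) \<and> (\<Sum>i\<in>UNIV. a i) = 1}"

definition Brac :: "(('d::finite \<Rightarrow> real) \<times> ('d \<Rightarrow> real)) set" where
  "Brac = {(a, b). a \<in> simplex \<and> b \<in> simplex \<and>
      (\<forall>i. sqrt (a i * b i) \<le> (\<Sum>j\<in>UNIV - {i}. sqrt (a j * b j)))}"

definition msum :: "nat \<Rightarrow> ('d::finite \<Rightarrow> complex mat) \<Rightarrow> complex mat" where
  "msum s F = mat s s (\<lambda>(p, q). \<Sum>i\<in>UNIV. F i $$ (p, q))"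

(* squared Frobenius norm, ||X||_F^2 = Tr(X X^* ) *)
definition frob2 :: "complex mat \<Rightarrow> real" where
  "frob2 X = (\<Sum>p<dim_row X. \<Sum>q<dim_col X. (cmod (X $$ (p, q)))\<^sup>2)"

definition Brac_s :: "nat \<Rightarrow> (('d::finite \<Rightarrow> real) \<times> ('d \<Rightarrow> real)) set" where
  "Brac_s s = {(a, b). a \<in> simplex \<and> b \<in> simplex \<and>
      (\<exists>A B :: 'd \<Rightarrow> complex mat.
         (\<forall>i. A i \<in> carrier_mat s s \<and> B i \<in> carrier_mat s s) \<and>
         msum s (\<lambda>i. A i * mat_adjoint (A i)) = 1\<^sub>m s \<and>
         msum s (\<lambda>i. B i * mat_adjoint (B i)) = 1\<^sub>m s \<and>
         msum s (\<lambda>i. A i * mat_adjoint (B i)) = 0\<^sub>m s s \<and>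
         (\<forall>i. frob2 (A i) / real s = a i \<and> frob2 (B i) / real s = b i))}"

end

theory Submission
  imports Defs
begin

(* Stacking witnesses block-diagonally preserves the three Gram identities and adds the
   unnormalised Frobenius masses s * alpha_i and s * beta_i; this gives the mixing inclusion.
   For s = 1 the witnesses are vectors x, y in C^d with sum_i x_i * cnj (y_i) = 0,
   |x_i|^2 = alpha_i and |y_i|^2 = beta_i. Such vectors exist iff the numbers
   sqrt (alpha_i * beta_i) are the side lengths of a closed polygon in the complex plane,
   i.e. iff no side is longer than the sum of the others. To close the polygon, split the sides
   other than a longest one into two groups whose total lengths differ by at most the longest
   side, and rotate the groups so that the three totals form a triangle. *)

section \<open>Block-diagonal matrices\<close>

lemma dim_mat_adjoint [simp]:
  "dim_row (mat_adjoint A) = dim_col A" "dim_col (mat_adjoint A) = dim_row A"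
  by (simp_all add: mat_adjoint_def)

lemma index_mat_adjoint [simp]:
  "i < dim_col A \<Longrightarrow> j < dim_row A \<Longrightarrow> mat_adjoint A $$ (i, j) = conjugate (A $$ (j, i))"
  by (simp add: mat_adjoint_def mat_of_rows_def)

lemma mat_adjoint_carrier [simp]: "A \<in> carrier_mat n m \<Longrightarrow> mat_adjoint A \<in> carrier_mat m n"
  by (intro carrier_matI) auto

definition block_diag :: "'a::zero mat \<Rightarrow> 'a mat \<Rightarrow> 'a mat" where
  "block_diag X Y = four_block_mat X (0\<^sub>m (dim_row X) (dim_col Y)) (0\<^sub>m (dim_row Y) (dim_col X)) Y"

lemma dim_block_diag [simp]:
  "dim_row (block_diag X Y) = dim_row X + dim_row Y" "dim_col (block_diag X Y) = dim_col X + dim_col Y"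
  by (simp_all add: block_diag_def)

lemma index_block_diag [simp]:
  "i < dim_row X + dim_row Y \<Longrightarrow> j < dim_col X + dim_col Y \<Longrightarrow> block_diag X Y $$ (i, j) =
    (if i < dim_row X \<and> j < dim_col X then X $$ (i, j)
     else if dim_row X \<le> i \<and> dim_col X \<le> j then Y $$ (i - dim_row X, j - dim_col X) else 0)"
  by (simp add: block_diag_def)

lemma block_diag_carrier [simp]:
  "X \<in> carrier_mat n m \<Longrightarrow> Y \<in> carrier_mat n' m' \<Longrightarrow> block_diag X Y \<in> carrier_mat (n + n') (m + m')"
  by (simp add: block_diag_def)

lemma mat_adjoint_block_diag:
  "mat_adjoint (block_diag X Y) = block_diag (mat_adjoint X) (mat_adjoint Y)"
  by (rule eq_matI) auto

lemma mult_block_diag: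
  assumes "X \<in> carrier_mat n k" "Y \<in> carrier_mat n' k'" "X' \<in> carrier_mat k m" "Y' \<in> carrier_mat k' m'"
  shows "block_diag X Y * block_diag X' Y' = block_diag (X * X') (Y * Y')"
  unfolding block_diag_def using assms
  by (subst mult_four_block_mat[of _ n k _ k' _ n']) auto

lemma block_diag_one [simp]: "block_diag (1\<^sub>m n) (1\<^sub>m m) = 1\<^sub>m (n + m)"
  by (simp add: block_diag_def)

lemma block_diag_zero [simp]: "block_diag (0\<^sub>m n n) (0\<^sub>m m m) = 0\<^sub>m (n + m) (n + m)"
  by (simp add: block_diag_def)

lemma msum_block_diag:
  assumes "\<And>i. F i \<in> carrier_mat n n" "\<And>i. G i \<in> carrier_mat m m"
  shows "msum (n + m) (\<lambda>i. block_diag (F i) (G i)) = block_diag (msum n F) (msum m G)"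
proof -
  have [simp]: "dim_row (F i) = n" "dim_col (F i) = n" "dim_row (G i) = m" "dim_col (G i) = m" for i
    using assms by auto
  show ?thesis by (intro eq_matI) (auto simp: msum_def)
qed

lemma sum_lessThan_add:
  "(\<Sum>i<m + (n::nat). f i) = (\<Sum>i<m. f i) + (\<Sum>i<n. f (m + i))"
  by (induction n) (simp_all add: add.assoc)

lemma frob2_block_diag: "frob2 (block_diag X Y) = frob2 X + frob2 Y"
  by (simp add: frob2_def block_diag_def sum_lessThan_add sum.distrib)

lemma msum_block_diag_mult_adjoint:
  assumes "\<And>i. X i \<in> carrier_mat n n" "\<And>i. Y i \<in> carrier_mat n n"
    "\<And>i. X' i \<in> carrier_mat m m" "\<And>i. Y' i \<in> carrier_mat m m"
  shows "msum (n + m) (\<lambda>i. block_diag (X i) (X' i) * mat_adjoint (block_diag (Y i) (Y' i)))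
    = block_diag (msum n (\<lambda>i. X i * mat_adjoint (Y i))) (msum m (\<lambda>i. X' i * mat_adjoint (Y' i)))"
proof -
  have blocks: "block_diag (X i) (X' i) * mat_adjoint (block_diag (Y i) (Y' i))
      = block_diag (X i * mat_adjoint (Y i)) (X' i * mat_adjoint (Y' i))" for i
    unfolding mat_adjoint_block_diag using assms by (intro mult_block_diag[of _ n n _ m m _ n _ m]) auto
  show ?thesis
    unfolding blocks
    by (intro msum_block_diag mult_carrier_mat[of _ n n] mult_carrier_mat[of _ m m] mat_adjoint_carrier assms)
qed

section \<open>Closing polygons in the complex plane\<close>

lemma exists_balanced_subset:
  fixes r :: "'a \<Rightarrow> real"
  assumes "finite J" "\<And>j. j \<in> J \<Longrightarrow> 0 \<le> r j \<and> r j \<le> c" "\<bar>x\<bar> \<le> c + sum r J"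
  shows "\<exists>S\<subseteq>J. \<bar>x + sum r S - sum r (J - S)\<bar> \<le> c"
  using assms
proof (induction J arbitrary: x rule: finite_induct)
  case empty
  then show ?case by auto
next
  case (insert j J)
  have rj: "0 \<le> r j" "r j \<le> c" and sum_J: "0 \<le> sum r J"
    using insert.prems(1) by (auto intro: sum_nonneg)
  have bound: "\<bar>x\<bar> \<le> c + r j + sum r J"
    using insert.prems(2) insert.hyps by simp
  show ?case
  proof (cases "x + r j - sum r J \<le> c")
    case True
    then have "\<bar>x + r j\<bar> \<le> c + sum r J"
      using bound by (auto simp: abs_le_iff)
    then obtain S where S: "S \<subseteq> J" "\<bar>x + r j + sum r S - sum r (J - S)\<bar> \<le> c"
      using insert.IH[of "x + r j"] insert.prems(1) by auto
    moreover have "finite S" "j \<notin> S"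
      using S(1) insert.hyps by (auto intro: finite_subset)
    ultimately have "sum r (insert j S) = r j + sum r S" "insert j J - insert j S = J - S"
      using insert.hyps by auto
    with S show ?thesis by (intro exI[of _ "insert j S"]) auto
  next
    case False
    then have "\<bar>x - r j\<bar> \<le> c + sum r J"
      using bound rj sum_J by (auto simp: abs_le_iff)
    then obtain S where S: "S \<subseteq> J" "\<bar>x - r j + sum r S - sum r (J - S)\<bar> \<le> c"
      using insert.IH[of "x - r j"] insert.prems(1) by auto
    moreover have "insert j J - S = insert j (J - S)"
      using S(1) insert.hyps by auto
    ultimately show ?thesis
      using insert.hyps by (intro exI[of _ S]) auto
  qed
qed

lemma exists_unit_norm_add:
  fixes p q c :: real
  assumes "0 \<le> p" "0 \<le> q" "\<bar>p - q\<bar> \<le> c" "c \<le> p + q"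
  shows "\<exists>w. cmod w = 1 \<and> cmod (of_real p + of_real q * w) = c"
proof -
  let ?f = "\<lambda>t. cmod (of_real p + of_real q * cis t)"
  have "?f pi = \<bar>p - q\<bar>" "?f 0 = p + q"
    using assms by (simp_all flip: of_real_diff of_real_add)
  moreover have "continuous_on {0..pi} ?f"
    by (intro continuous_intros)
  ultimately obtain t where "?f t = c"
    using IVT2'[of ?f pi c 0] assms pi_ge_zero by auto
  then show ?thesis by (intro exI[of _ "cis t"]) simp
qed

lemma norm_le_sum_others:
  fixes z :: "'a \<Rightarrow> 'b::real_normed_vector"
  assumes "finite I" "i \<in> I" "sum z I = 0"
  shows "norm (z i) \<le> (\<Sum>j\<in>I - {i}. norm (z j))"
proof -
  have "z i = - (\<Sum>j\<in>I - {i}. z j)"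
    using assms by (simp add: sum.remove eq_neg_iff_add_eq_0)
  then show ?thesis
    by (metis norm_minus_cancel norm_sum)
qed

lemma polygon_closure:
  fixes r :: "'d::finite \<Rightarrow> real"
  assumes "\<And>i. 0 \<le> r i" "\<And>i. r i \<le> (\<Sum>j\<in>UNIV - {i}. r j)"
  shows "\<exists>u. (\<forall>i. cmod (u i) = 1) \<and> (\<Sum>i\<in>UNIV. of_real (r i) * u i) = 0"
proof -
  obtain k where k: "r k = Max (range r)"
    using Max_in[of "range r"] by (metis finite_UNIV finite_imageI UNIV_not_empty empty_is_image imageE)
  then have k_max: "r j \<le> r k" for j
    by simp
  define J where "J = UNIV - {k}"
  have "0 \<le> sum r J"
    by (simp add: assms(1) sum_nonneg)
  then obtain S where "S \<subseteq> J" and balanced: "\<bar>sum r S - sum r (J - S)\<bar> \<le> r k"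
    using exists_balanced_subset[of J r "r k" 0] assms(1) k_max by force
  define p where "p = sum r S"
  define q where "q = sum r (J - S)"
  have "p + q = sum r J"
    unfolding p_def q_def using \<open>S \<subseteq> J\<close> by (simp add: sum.subset_diff)
  then obtain w where w: "cmod w = 1" "cmod (of_real p + of_real q * w) = r k"
    using exists_unit_norm_add[of p q "r k"] balanced assms
    by (auto simp: p_def q_def J_def intro: sum_nonneg)
  define z where "z = of_real p + of_real q * w"
  define u where "u j = (if j = k then - cis (Arg z) else if j \<in> S then 1 else w)" for j
  have "(\<Sum>i\<in>UNIV. f i) = f k + (\<Sum>i\<in>S. f i) + (\<Sum>i\<in>J - S. f i)" for f :: "'d \<Rightarrow> complex"
    using sum.remove[of UNIV k f] sum.subset_diff[OF \<open>S \<subseteq> J\<close>, of f] by (simp add: J_def)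
  then have "(\<Sum>i\<in>UNIV. of_real (r i) * u i) = of_real (r k) * u k + (\<Sum>i\<in>S. of_real (r i) * u i)
      + (\<Sum>i\<in>J - S. of_real (r i) * u i)" .
  also have "\<dots> = - of_real (cmod z) * cis (Arg z) + z"
    using \<open>S \<subseteq> J\<close> w(2)
    by (auto simp: u_def z_def p_def q_def J_def sum_distrib_right intro!: sum.cong)
  also have "\<dots> = 0"
    by (simp add: rcis_cmod_Arg flip: rcis_def)
  finally show ?thesis
    using w(1) by (intro exI[of _ u]) (auto simp: u_def)
qed

section \<open>Realizable Frobenius masses\<close>

definition realizable :: "nat \<Rightarrow> ('d::finite \<Rightarrow> real) \<Rightarrow> ('d \<Rightarrow> real) \<Rightarrow> bool" where
  "realizable s a b \<longleftrightarrow> (\<exists>A B :: 'd \<Rightarrow> complex mat.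
     (\<forall>i. A i \<in> carrier_mat s s \<and> B i \<in> carrier_mat s s) \<and>
     msum s (\<lambda>i. A i * mat_adjoint (A i)) = 1\<^sub>m s \<and>
     msum s (\<lambda>i. B i * mat_adjoint (B i)) = 1\<^sub>m s \<and>
     msum s (\<lambda>i. A i * mat_adjoint (B i)) = 0\<^sub>m s s \<and>
     (\<forall>i. frob2 (A i) = a i \<and> frob2 (B i) = b i))"

lemma Brac_s_iff_realizable:
  assumes "0 < s"
  shows "(a, b) \<in> Brac_s s \<longleftrightarrow>
    a \<in> simplex \<and> b \<in> simplex \<and> realizable s (\<lambda>i. real s * a i) (\<lambda>i. real s * b i)"
proof -
  have "y / real s = x \<longleftrightarrow> y = real s * x" for x y
    using assms by (auto simp: field_simps)
  then show ?thesis
    unfolding Brac_s_def realizable_def by simp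
qed

lemma realizable_zero: "realizable 0 (\<lambda>_. 0) (\<lambda>_. 0)"
proof -
  have "M = N" if "M \<in> carrier_mat 0 0" "N \<in> carrier_mat 0 0" for M N :: "complex mat"
    using that by (intro eq_matI) auto
  then show ?thesis
    unfolding realizable_def
    by (intro exI[of _ "\<lambda>_. 0\<^sub>m 0 0"]) (simp add: frob2_def msum_def)
qed

lemma realizable_add:
  assumes "realizable n a b" "realizable m a' b'"
  shows "realizable (n + m) (\<lambda>i. a i + a' i) (\<lambda>i. b i + b' i)"
proof -
  obtain A B :: "_ \<Rightarrow> complex mat" where
    AB: "\<And>i. A i \<in> carrier_mat n n" "\<And>i. B i \<in> carrier_mat n n"
      "msum n (\<lambda>i. A i * mat_adjoint (A i)) = 1\<^sub>m n"
      "msum n (\<lambda>i. B i * mat_adjoint (B i)) = 1\<^sub>m n"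
      "msum n (\<lambda>i. A i * mat_adjoint (B i)) = 0\<^sub>m n n"
      "\<And>i. frob2 (A i) = a i" "\<And>i. frob2 (B i) = b i"
    using assms(1) unfolding realizable_def by blast
  obtain A' B' :: "_ \<Rightarrow> complex mat" where
    AB': "\<And>i. A' i \<in> carrier_mat m m" "\<And>i. B' i \<in> carrier_mat m m"
      "msum m (\<lambda>i. A' i * mat_adjoint (A' i)) = 1\<^sub>m m"
      "msum m (\<lambda>i. B' i * mat_adjoint (B' i)) = 1\<^sub>m m"
      "msum m (\<lambda>i. A' i * mat_adjoint (B' i)) = 0\<^sub>m m m"
      "\<And>i. frob2 (A' i) = a' i" "\<And>i. frob2 (B' i) = b' i"
    using assms(2) unfolding realizable_def by blast
  define AA where "AA i = block_diag (A i) (A' i)" for i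
  define BB where "BB i = block_diag (B i) (B' i)" for i
  have "msum (n + m) (\<lambda>i. AA i * mat_adjoint (AA i)) = 1\<^sub>m (n + m)"
    "msum (n + m) (\<lambda>i. BB i * mat_adjoint (BB i)) = 1\<^sub>m (n + m)"
    "msum (n + m) (\<lambda>i. AA i * mat_adjoint (BB i)) = 0\<^sub>m (n + m) (n + m)"
    unfolding AA_def BB_def
    by (simp_all add: msum_block_diag_mult_adjoint[OF AB(1) AB(1) AB'(1) AB'(1)]
        msum_block_diag_mult_adjoint[OF AB(2) AB(2) AB'(2) AB'(2)]
        msum_block_diag_mult_adjoint[OF AB(1) AB(2) AB'(1) AB'(2)] AB AB')
  moreover have "AA i \<in> carrier_mat (n + m) (n + m) \<and> BB i \<in> carrier_mat (n + m) (n + m)" for i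
    unfolding AA_def BB_def using AB AB' by simp
  moreover have "frob2 (AA i) = a i + a' i \<and> frob2 (BB i) = b i + b' i" for i
    unfolding AA_def BB_def by (simp add: frob2_block_diag AB AB')
  ultimately show ?thesis
    unfolding realizable_def by blast
qed

lemma realizable_sum:
  assumes "finite J" "\<And>j. j \<in> J \<Longrightarrow> realizable (s j) (a j) (b j)"
  shows "realizable (\<Sum>j\<in>J. s j) (\<lambda>i. \<Sum>j\<in>J. a j i) (\<lambda>i. \<Sum>j\<in>J. b j i)"
  using assms by (induction J rule: finite_induct) (simp_all add: realizable_zero realizable_add)

lemma simplex_convex_comb:
  assumes "finite J" "\<And>j. j \<in> J \<Longrightarrow> 0 \<le> w j \<and> a j \<in> simplex" "(\<Sum>j\<in>J. w j) = 1"
  shows "(\<lambda>i. \<Sum>j\<in>J. w j * a j i) \<in> simplex"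
proof -
  have "(\<Sum>i\<in>UNIV. \<Sum>j\<in>J. w j * a j i) = (\<Sum>j\<in>J. w j * (\<Sum>i\<in>UNIV. a j i))"
    by (simp add: sum.swap[of _ UNIV] sum_distrib_left)
  also have "\<dots> = 1"
    using assms by (simp add: simplex_def)
  finally show ?thesis
    using assms by (auto simp: simplex_def intro!: sum_nonneg)
qed

lemma Brac_s_mixture:
  fixes P :: "'j \<Rightarrow> ('d::finite \<Rightarrow> real) \<times> ('d \<Rightarrow> real)"
  assumes "finite J" "J \<noteq> {}" "\<And>j. j \<in> J \<Longrightarrow> 0 < s j" "\<And>j. j \<in> J \<Longrightarrow> P j \<in> Brac_s (s j)"
  defines "S \<equiv> \<Sum>l\<in>J. s l"
  shows "((\<lambda>i. \<Sum>j\<in>J. real (s j) / real S * fst (P j) i),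
          (\<lambda>i. \<Sum>j\<in>J. real (s j) / real S * snd (P j) i)) \<in> Brac_s S"
proof -
  have "0 < S"
    unfolding S_def using assms by (simp add: sum_pos)
  have weights: "(\<Sum>j\<in>J. real (s j) / real S) = 1"
    using \<open>0 < S\<close> by (simp add: S_def flip: sum_divide_distrib of_nat_sum)
  have P_j: "fst (P j) \<in> simplex \<and> snd (P j) \<in> simplex \<and>
      realizable (s j) (\<lambda>i. real (s j) * fst (P j) i) (\<lambda>i. real (s j) * snd (P j) i)" if "j \<in> J" for j
    using assms(3,4)[OF that] Brac_s_iff_realizable[of "s j" "fst (P j)" "snd (P j)"] by simp
  have scaled: "(\<lambda>i. real S * (\<Sum>j\<in>J. real (s j) / real S * g j i)) = (\<lambda>i. \<Sum>j\<in>J. real (s j) * g j i)"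
    for g :: "'j \<Rightarrow> 'd \<Rightarrow> real"
    using \<open>0 < S\<close> by (simp add: sum_distrib_left)
  have "realizable S (\<lambda>i. \<Sum>j\<in>J. real (s j) * fst (P j) i) (\<lambda>i. \<Sum>j\<in>J. real (s j) * snd (P j) i)"
    unfolding S_def using P_j by (intro realizable_sum \<open>finite J\<close>) auto
  moreover have "(\<lambda>i. \<Sum>j\<in>J. real (s j) / real S * fst (P j) i) \<in> simplex"
    "(\<lambda>i. \<Sum>j\<in>J. real (s j) / real S * snd (P j) i) \<in> simplex"
    by (intro simplex_convex_comb[OF \<open>finite J\<close> _ weights]; simp add: P_j)+
  ultimately show ?thesis
    unfolding Brac_s_iff_realizable[OF \<open>0 < S\<close>] prod.sel
      scaled[of "\<lambda>j. fst (P j)"] scaled[of "\<lambda>j. snd (P j)"] by blast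
qed

lemma mat_1_1_eq_iff [simp]: "mat 1 1 (\<lambda>_. u) = mat 1 1 (\<lambda>_. v) \<longleftrightarrow> u = v"
  by (auto dest: arg_cong[where f = "\<lambda>M. M $$ (0, 0)"])

lemma carrier_mat_1_1_eq: "M \<in> carrier_mat 1 1 \<Longrightarrow> M = mat 1 1 (\<lambda>_. M $$ (0, 0))"
  by (rule eq_matI) auto

lemma one_mat_1: "1\<^sub>m 1 = mat 1 1 (\<lambda>_. 1)"
  by (rule eq_matI) auto

lemma zero_mat_1_1: "0\<^sub>m 1 1 = mat 1 1 (\<lambda>_. 0)"
  by (rule eq_matI) auto

lemma mat_1_1_mult_adjoint:
  "mat 1 1 (\<lambda>_. x) * mat_adjoint (mat 1 1 (\<lambda>_. y)) = mat 1 1 (\<lambda>_. x * cnj y)"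
  by (rule eq_matI) (simp_all add: scalar_prod_def conjugate_complex_def)

lemma msum_mat_1_1: "msum 1 (\<lambda>i. mat 1 1 (\<lambda>_. f i)) = mat 1 1 (\<lambda>_. \<Sum>i\<in>UNIV. f i)"
  by (rule eq_matI) (simp_all add: msum_def)

lemma frob2_mat_1_1: "frob2 (mat 1 1 (\<lambda>_. x)) = (cmod x)\<^sup>2"
  by (simp add: frob2_def)

lemma realizable_1_iff:
  "realizable 1 a b \<longleftrightarrow> (\<exists>x y :: 'd::finite \<Rightarrow> complex.
     (\<Sum>i\<in>UNIV. x i * cnj (x i)) = 1 \<and> (\<Sum>i\<in>UNIV. y i * cnj (y i)) = 1 \<and>
     (\<Sum>i\<in>UNIV. x i * cnj (y i)) = 0 \<and> (\<forall>i. (cmod (x i))\<^sup>2 = a i \<and> (cmod (y i))\<^sup>2 = b i))"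
  (is "_ \<longleftrightarrow> (\<exists>x y. ?scalar x y)")
proof
  assume "realizable 1 a b"
  then obtain A B :: "'d \<Rightarrow> complex mat" where carrier: "\<forall>i. A i \<in> carrier_mat 1 1 \<and> B i \<in> carrier_mat 1 1"
    and eqs: "msum 1 (\<lambda>i. A i * mat_adjoint (A i)) = 1\<^sub>m 1"
      "msum 1 (\<lambda>i. B i * mat_adjoint (B i)) = 1\<^sub>m 1"
      "msum 1 (\<lambda>i. A i * mat_adjoint (B i)) = 0\<^sub>m 1 1"
      "\<forall>i. frob2 (A i) = a i \<and> frob2 (B i) = b i"
    unfolding realizable_def by blast
  define x where "x i = A i $$ (0, 0)" for i
  define y where "y i = B i $$ (0, 0)" for i
  have scalar_AB: "A = (\<lambda>i. mat 1 1 (\<lambda>_. x i))" "B = (\<lambda>i. mat 1 1 (\<lambda>_. y i))"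
    using carrier carrier_mat_1_1_eq by (auto simp: x_def y_def)
  from eqs[unfolded scalar_AB mat_1_1_mult_adjoint msum_mat_1_1 one_mat_1 zero_mat_1_1
      mat_1_1_eq_iff frob2_mat_1_1]
  have "?scalar x y" by blast
  then show "\<exists>x y. ?scalar x y" by blast
next
  assume "\<exists>x y. ?scalar x y"
  then obtain x y where "?scalar x y" by blast
  then show "realizable 1 a b"
    unfolding realizable_def
    by (intro exI[of _ "\<lambda>i. mat 1 1 (\<lambda>_. x i)"] exI[of _ "\<lambda>i. mat 1 1 (\<lambda>_. y i)"])
      (simp only: mat_1_1_mult_adjoint msum_mat_1_1 one_mat_1 zero_mat_1_1 mat_1_1_eq_iff frob2_mat_1_1
        mat_carrier simp_thms)
qed

lemma realizable_1_iff_polygon: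
  fixes a b :: "'d::finite \<Rightarrow> real"
  assumes "a \<in> simplex" "b \<in> simplex"
  shows "realizable 1 a b \<longleftrightarrow> (\<forall>i. sqrt (a i * b i) \<le> (\<Sum>j\<in>UNIV - {i}. sqrt (a j * b j)))"
proof
  assume "realizable 1 a b"
  then obtain x y :: "'d \<Rightarrow> complex" where xy: "(\<Sum>i\<in>UNIV. x i * cnj (y i)) = 0"
    "\<forall>i. (cmod (x i))\<^sup>2 = a i \<and> (cmod (y i))\<^sup>2 = b i"
    unfolding realizable_1_iff by blast
  have "sqrt (a i * b i) = cmod (x i * cnj (y i))" for i
  proof -
    have "sqrt (a i) = cmod (x i)" "sqrt (b i) = cmod (y i)"
      using xy(2) by (auto intro!: real_sqrt_unique)
    then show ?thesis
      by (simp add: real_sqrt_mult norm_mult)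
  qed
  then show "\<forall>i. sqrt (a i * b i) \<le> (\<Sum>j\<in>UNIV - {i}. sqrt (a j * b j))"
    using norm_le_sum_others[of UNIV _ "\<lambda>i. x i * cnj (y i)"] xy(1) by simp
next
  assume polygon: "\<forall>i. sqrt (a i * b i) \<le> (\<Sum>j\<in>UNIV - {i}. sqrt (a j * b j))"
  have nonneg: "0 \<le> a i" "0 \<le> b i" for i
    using assms by (auto simp: simplex_def)
  obtain u where u: "\<forall>i. cmod (u i) = 1" "(\<Sum>i\<in>UNIV. of_real (sqrt (a i * b i)) * u i) = 0"
    using polygon_closure[of "\<lambda>i. sqrt (a i * b i)"] polygon nonneg by auto
  define x where "x i = complex_of_real (sqrt (a i))" for i
  define y where "y i = complex_of_real (sqrt (b i)) * cnj (u i)" for i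
  have norms: "(cmod (x i))\<^sup>2 = a i \<and> (cmod (y i))\<^sup>2 = b i" for i
    using nonneg u(1) by (simp add: x_def y_def norm_mult)
  have unit_sum: "(\<Sum>i\<in>UNIV. z i * cnj (z i)) = 1" if "\<And>i. (cmod (z i))\<^sup>2 = c i" "c \<in> simplex" for z c
    using that by (simp add: simplex_def flip: complex_norm_square of_real_sum)
  moreover have "(\<Sum>i\<in>UNIV. x i * cnj (y i)) = 0"
    using u(2) by (simp add: x_def y_def real_sqrt_mult mult.assoc)
  ultimately show "realizable 1 a b"
    unfolding realizable_1_iff using norms assms by blast
qed

lemma Brac_s_1_eq_Brac: "(Brac_s 1 :: (('d::finite \<Rightarrow> real) \<times> ('d \<Rightarrow> real)) set) = Brac"
proof -
  have "(a, b) \<in> Brac_s 1 \<longleftrightarrow> (a, b) \<in> Brac" for a b :: "'d \<Rightarrow> real"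
    using Brac_s_iff_realizable[of 1 a b] realizable_1_iff_polygon[of a b] by (auto simp: Brac_def)
  then show ?thesis
    by (simp add: set_eq_iff split_paired_All)
qed

lemma Brac_subset_Brac_s:
  assumes "1 \<le> t"
  shows "(Brac :: (('d::finite \<Rightarrow> real) \<times> ('d \<Rightarrow> real)) set) \<subseteq> Brac_s t"
proof
  fix p :: "('d \<Rightarrow> real) \<times> ('d \<Rightarrow> real)"
  assume "p \<in> Brac"
  then have "p \<in> Brac_s 1"
    using Brac_s_1_eq_Brac by blast
  then have "((\<lambda>i. \<Sum>j<t. real 1 / real (\<Sum>l<t. 1) * fst p i), (\<lambda>i. \<Sum>j<t. real 1 / real (\<Sum>l<t. 1) * snd p i))
      \<in> Brac_s (\<Sum>l<t. 1)"
    using assms by (intro Brac_s_mixture) (auto simp: lessThan_empty_iff)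
  then show "p \<in> Brac_s t"
    using assms by simp
qed

theorem corollary3p6:
  fixes k :: nat and s :: "nat \<Rightarrow> nat"
    and P :: "nat \<Rightarrow> ('d::finite \<Rightarrow> real) \<times> ('d \<Rightarrow> real)"
  assumes "card (UNIV :: 'd set) \<ge> 2"
    and "k \<ge> 1"
    and "\<forall>j<k. s j \<ge> 1"
    and "\<forall>j<k. P j \<in> Brac_s (s j)"
  shows "((\<lambda>i. \<Sum>j<k. real (s j) / real (\<Sum>l<k. s l) * fst (P j) i),
          (\<lambda>i. \<Sum>j<k. real (s j) / real (\<Sum>l<k. s l) * snd (P j) i))
           \<in> Brac_s (\<Sum>l<k. s l)
       \<and> (Brac_s 1 :: (('d \<Rightarrow> real) \<times> ('d \<Rightarrow> real)) set) = Brac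
       \<and> (\<forall>t\<ge>1. (Brac :: (('d \<Rightarrow> real) \<times> ('d \<Rightarrow> real)) set) \<subseteq> Brac_s t)"
proof (intro conjI allI impI)
  show "((\<lambda>i. \<Sum>j<k. real (s j) / real (\<Sum>l<k. s l) * fst (P j) i),
         (\<lambda>i. \<Sum>j<k. real (s j) / real (\<Sum>l<k. s l) * snd (P j) i)) \<in> Brac_s (\<Sum>l<k. s l)"
    using assms(2-4) by (intro Brac_s_mixture) (auto simp: lessThan_empty_iff)
  show "Brac_s 1 = Brac"
    by (rule Brac_s_1_eq_Brac)
  show "Brac \<subseteq> Brac_s t" if "1 \<le> t" for t
    using that by (rule Brac_subset_Brac_s)
qed

end
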